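(* Let $(\varphi,\mathcal A,V)$ be a linear system with $\mathcal A$ and $V$ finite dimensional. (i) If $(\pi,S,T,W)$ is a principle dilation system of $(\varphi,\mathcal A,V)$ with $\dim W=(\dim\mathcal A)(\dim V)$, then every linearly minimal homomorphism dilation system of $(\varphi,\mathcal A,V)$ is irreducible, hence principle. (ii) If $(\pi,S,T,W)$ is a principle dilation system of $(\varphi,\mathcal A,V)$ and $(\pi_1,S_1,T_1,W_1)$ is a linearly minimal homomorphism dilation system with $\dim W_1\le\dim W$, then $(\pi_1,S_1,T_1,W_1)$ is irreducible.
   Context: Fix a field $\mathbb F$; all algebras and vector spaces are over $\mathbb F$, and $L(X)$ is the algebra of linear maps $X\to X$. A linear system $(\varphi,\mathcal A,V)$: $\mathcal A$ a unital associative algebra with unit $I$, $V$ a vector space, $\varphi:\mathcal A\to L(V)$ linear with $\varphi(I)=\mathrm{id}_V$. A homomorphism dilation system $(\pi,S,T,W)$: $W$ a vector space, $\pi:\mathcal A\to L(W)$ a unital homomorphism, $T:V\to W$ injective linear, $S:W\to V$ surjective linear, $\varphi(a)=S\pi(a)T$ for all $a$. It is linearly minimal if $W=\mathrm{span}\{\pi(a)Tv\}$, irreducible if $\ker S$ contains no nonzero subspace invariant under all $\pi(a)$, and principle if linearly minimal and irreducible. *)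

theory Defs
  imports Main "HOL.Vector_Spaces"
begin

definition unital_algebra ::
  "('f::field \<Rightarrow> 'a::ab_group_add \<Rightarrow> 'a) \<Rightarrow> ('a \<Rightarrow> 'a \<Rightarrow> 'a) \<Rightarrow> 'a \<Rightarrow> bool" where
  "unital_algebra sA mult one \<longleftrightarrow>
     vector_space sA \<and>
     (\<forall>x. Vector_Spaces.linear sA sA (\<lambda>y. mult x y)) \<and>
     (\<forall>y. Vector_Spaces.linear sA sA (\<lambda>x. mult x y)) \<and>
     (\<forall>x y z. mult (mult x y) z = mult x (mult y z)) \<and>
     (\<forall>x. mult one x = x \<and> mult x one = x)"

definition fin_dim :: "('f::field \<Rightarrow> 'v::ab_group_add \<Rightarrow> 'v) \<Rightarrow> bool" where
  "fin_dim s \<longleftrightarrow> (\<exists>B. finite B \<and> module.span s B = UNIV)"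

abbreviation dimension :: "('f::field \<Rightarrow> 'v::ab_group_add \<Rightarrow> 'v) \<Rightarrow> nat" where
  "dimension s \<equiv> vector_space.dim s UNIV"

definition linear_system ::
  "('f::field \<Rightarrow> 'a::ab_group_add \<Rightarrow> 'a) \<Rightarrow> ('a \<Rightarrow> 'a \<Rightarrow> 'a) \<Rightarrow> 'a \<Rightarrow>
   ('f \<Rightarrow> 'v::ab_group_add \<Rightarrow> 'v) \<Rightarrow> ('a \<Rightarrow> 'v \<Rightarrow> 'v) \<Rightarrow> bool" where
  "linear_system sA mult one sV \<phi> \<longleftrightarrow>
     unital_algebra sA mult one \<and> vector_space sV \<and>
     (\<forall>a. Vector_Spaces.linear sV sV (\<phi> a)) \<and>
     (\<forall>a b. \<phi> (a + b) = (\<lambda>v. \<phi> a v + \<phi> b v)) \<and>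
     (\<forall>c a. \<phi> (sA c a) = (\<lambda>v. sV c (\<phi> a v))) \<and>
     \<phi> one = id"

definition hom_dilation ::
  "('f::field \<Rightarrow> 'a::ab_group_add \<Rightarrow> 'a) \<Rightarrow> ('a \<Rightarrow> 'a \<Rightarrow> 'a) \<Rightarrow> 'a \<Rightarrow>
   ('f \<Rightarrow> 'v::ab_group_add \<Rightarrow> 'v) \<Rightarrow> ('a \<Rightarrow> 'v \<Rightarrow> 'v) \<Rightarrow>
   ('f \<Rightarrow> 'w::ab_group_add \<Rightarrow> 'w) \<Rightarrow> ('a \<Rightarrow> 'w \<Rightarrow> 'w) \<Rightarrow> ('w \<Rightarrow> 'v) \<Rightarrow> ('v \<Rightarrow> 'w) \<Rightarrow> bool" where
  "hom_dilation sA mult one sV \<phi> sW \<pi> S T \<longleftrightarrow>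
     vector_space sW \<and>
     (\<forall>a. Vector_Spaces.linear sW sW (\<pi> a)) \<and>
     (\<forall>a b. \<pi> (a + b) = (\<lambda>w. \<pi> a w + \<pi> b w)) \<and>
     (\<forall>c a. \<pi> (sA c a) = (\<lambda>w. sW c (\<pi> a w))) \<and>
     (\<forall>a b. \<pi> (mult a b) = \<pi> a \<circ> \<pi> b) \<and>
     \<pi> one = id \<and>
     Vector_Spaces.linear sV sW T \<and> inj T \<and>
     Vector_Spaces.linear sW sV S \<and> surj S \<and>
     (\<forall>a. \<phi> a = S \<circ> \<pi> a \<circ> T)"

definition linearly_minimal ::
  "('f::field \<Rightarrow> 'w::ab_group_add \<Rightarrow> 'w) \<Rightarrow> ('a \<Rightarrow> 'w \<Rightarrow> 'w) \<Rightarrow> ('v \<Rightarrow> 'w) \<Rightarrow> bool" where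
  "linearly_minimal sW \<pi> T \<longleftrightarrow> module.span sW {\<pi> a (T v) | a v. True} = UNIV"

definition irreducible_dil ::
  "('f::field \<Rightarrow> 'w::ab_group_add \<Rightarrow> 'w) \<Rightarrow> ('a \<Rightarrow> 'w \<Rightarrow> 'w) \<Rightarrow> ('w \<Rightarrow> 'v::zero) \<Rightarrow> bool" where
  "irreducible_dil sW \<pi> S \<longleftrightarrow>
     (\<forall>U. module.subspace sW U \<and> U \<subseteq> {w. S w = 0} \<and> (\<forall>a. \<pi> a ` U \<subseteq> U) \<longrightarrow> U = {0})"

definition principle_dil ::
  "('f::field \<Rightarrow> 'w::ab_group_add \<Rightarrow> 'w) \<Rightarrow> ('a \<Rightarrow> 'w \<Rightarrow> 'w) \<Rightarrow> ('w \<Rightarrow> 'v::zero) \<Rightarrow> ('v \<Rightarrow> 'w) \<Rightarrow> bool" where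
  "principle_dil sW \<pi> S T \<longleftrightarrow> linearly_minimal sW \<pi> T \<and> irreducible_dil sW \<pi> S"

end

theory Submission
  imports Defs
begin

text \<open>
  Compare dilations through their compressions \<open>x \<mapsto> (b \<mapsto> S \<pi>(b) x)\<close>.
  For a linearly minimal dilation every compression of \<open>W\<close> is one of \<open>W\<^sub>1\<close>, since both
  agree with \<open>\<phi>(ba) v\<close> on the generators \<open>\<pi>(a) T v\<close>; for an irreducible one the
  compression determines the vector, because the vectors with zero compression form an
  invariant subspace of \<open>ker S\<close>. Hence a principle dilation \<open>W\<close> is a linear image of any
  linearly minimal \<open>W\<^sub>1\<close> under a map killing every invariant subspace of \<open>ker S\<^sub>1\<close>, and such
  a nonzero subspace would force \<open>dim W < dim W\<^sub>1\<close>. Finally a linearly minimal \<open>W\<^sub>1\<close> is spanned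
  by the vectors \<open>\<pi>\<^sub>1(a) T\<^sub>1 v\<close> with \<open>a\<close>, \<open>v\<close> running through bases, so
  \<open>dim W\<^sub>1 \<le> dim \<A> \<cdot> dim V\<close>.
\<close>

lemma fin_dim_obtain_basis:
  assumes "vector_space s" and "fin_dim s"
  obtains B where "finite B" "module.span s B = UNIV" "card B = dimension s"
proof -
  interpret vector_space s by fact
  obtain B where B: "independent B" "UNIV \<subseteq> span B" "card B = dim UNIV"
    using basis_exists[of UNIV] by blast
  obtain C where "finite C" "span C = UNIV"
    using \<open>fin_dim s\<close> by (auto simp: fin_dim_def)
  then have "finite B"
    using independent_span_bound[of C B] B by auto
  with B show thesis
    using that by auto
qed

lemma dim_less_if_linear_surj_kills_nonzero:
  assumes fin: "fin_dim s1" and lin: "Vector_Spaces.linear s1 s2 f" and "surj f"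
    and "f j = 0" and "j \<noteq> 0"
  shows "dimension s2 < dimension s1"
proof -
  interpret V1: vector_space s1 using lin by (simp add: linear_iff)
  interpret V2: vector_space s2 using lin by (simp add: linear_iff)
  interpret P: vector_space_pair s1 s2 ..
  obtain C where C: "finite C" "V1.span C = UNIV"
    using fin by (auto simp: fin_dim_def)
  have "V1.independent {j}"
    using \<open>j \<noteq> 0\<close> by (intro V1.independent_insertI) (auto simp: V1.span_empty V1.independent_empty)
  then obtain B where B: "j \<in> B" "V1.independent B" "UNIV \<subseteq> V1.span B"
    using V1.maximal_independent_subset_extend[of "{j}" UNIV] by auto
  have "finite B"
    using V1.independent_span_bound[OF C(1) B(2)] C(2) by auto
  have "UNIV = f ` V1.span B"
    using \<open>surj f\<close> B(3) by (simp add: top.extremum_unique)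
  also have "\<dots> = V2.span (f ` B)"
    by (rule P.linear_span_image[OF lin, symmetric])
  also have "\<dots> = V2.span (f ` (B - {j}))"
    using \<open>j \<in> B\<close> \<open>f j = 0\<close> by (metis V2.span_insert_0 image_insert insert_Diff)
  finally have "dimension s2 \<le> card (f ` (B - {j}))"
    using \<open>finite B\<close> by (intro V2.dim_le_card) auto
  also have "\<dots> < card B"
    using \<open>finite B\<close> \<open>j \<in> B\<close> card_image_le[of "B - {j}" f] card_Diff1_less[of B j] by simp
  also have "\<dots> = dimension s1"
    using V1.basis_card_eq_dim[of B UNIV] B by auto
  finally show ?thesis .
qed

lemma bilinear_in_span_image_of_spanning_sets:
  assumes lin1: "\<And>v. Vector_Spaces.linear s1 s3 (\<lambda>a. g a v)"
    and lin2: "\<And>a. Vector_Spaces.linear s2 s3 (g a)"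
    and BA: "module.span s1 BA = UNIV" and BV: "module.span s2 BV = UNIV"
  shows "g a v \<in> module.span s3 (case_prod g ` (BA \<times> BV))"
proof -
  have vs1: "vector_space s1" and vs2: "vector_space s2" and vs3: "vector_space s3"
    using lin1 lin2 by (auto simp: linear_iff)
  interpret V3: vector_space s3 by fact
  interpret P1: vector_space_pair s1 s3 using vs1 vs3 by (rule vector_space_pair.intro)
  interpret P2: vector_space_pair s2 s3 using vs2 vs3 by (rule vector_space_pair.intro)
  let ?G = "V3.span (case_prod g ` (BA \<times> BV))"
  have "g a' v \<in> ?G" if "a' \<in> BA" for a'
  proof -
    have "g a' ` BV \<subseteq> case_prod g ` (BA \<times> BV)"
      using that by auto
    moreover have "g a' v \<in> V3.span (g a' ` BV)"
      unfolding P2.linear_span_image[OF lin2] using BV by auto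
    ultimately show ?thesis
      using V3.span_mono by blast
  qed
  then have "V3.span ((\<lambda>a. g a v) ` BA) \<subseteq> ?G"
    by (intro V3.span_minimal) auto
  moreover have "g a v \<in> V3.span ((\<lambda>a. g a v) ` BA)"
    unfolding P1.linear_span_image[OF lin1] using BA by auto
  ultimately show ?thesis
    by blast
qed

lemma hom_dilation_vector_space_pair:
  assumes "hom_dilation sA mult one sV \<phi> sW \<pi> S T"
  shows "vector_space_pair sW sV"
  using assms by (simp add: hom_dilation_def linear_iff vector_space_pair.intro)

lemma hom_dilation_compression_linear:
  assumes "hom_dilation sA mult one sV \<phi> sW \<pi> S T"
  shows "Vector_Spaces.linear sW sV (\<lambda>x. S (\<pi> b x))"
  using assms Vector_Spaces.linear_compose[of sW sW "\<pi> b" sV S]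
  by (simp add: hom_dilation_def comp_def)

lemma hom_dilation_compression_generator:
  assumes "hom_dilation sA mult one sV \<phi> sW \<pi> S T"
  shows "S (\<pi> b (\<pi> a (T v))) = \<phi> (mult b a) v"
  using assms by (simp add: hom_dilation_def)

lemma linearly_minimal_compression_realized:
  assumes D: "hom_dilation sA mult one sV \<phi> sW \<pi> S T"
    and D1: "hom_dilation sA mult one sV \<phi> sW1 \<pi>1 S1 T1"
    and lm: "linearly_minimal sW \<pi> T"
  shows "\<exists>y. \<forall>b. S (\<pi> b x) = S1 (\<pi>1 b y)"
proof -
  interpret W: vector_space sW using D by (simp add: hom_dilation_def)
  interpret P: vector_space_pair sW sV using hom_dilation_vector_space_pair[OF D] .
  interpret P1: vector_space_pair sW1 sV using hom_dilation_vector_space_pair[OF D1] .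
  note L = hom_dilation_compression_linear[OF D]
  note L1 = hom_dilation_compression_linear[OF D1]
  let ?R = "{x. \<exists>y. \<forall>b. S (\<pi> b x) = S1 (\<pi>1 b y)}"
  have "W.subspace ?R"
    unfolding W.subspace_def
  proof (intro conjI ballI allI)
    show "0 \<in> ?R"
      using P.linear_0[OF L] P1.linear_0[OF L1] by (auto intro!: exI[of _ 0])
  next
    fix x z assume "x \<in> ?R" "z \<in> ?R"
    then obtain y y' where "\<forall>b. S (\<pi> b x) = S1 (\<pi>1 b y)" "\<forall>b. S (\<pi> b z) = S1 (\<pi>1 b y')"
      by auto
    then show "x + z \<in> ?R"
      using P.linear_add[OF L] P1.linear_add[OF L1] by (auto intro!: exI[of _ "y + y'"])
  next
    fix c x assume "x \<in> ?R"
    then obtain y where "\<forall>b. S (\<pi> b x) = S1 (\<pi>1 b y)"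
      by auto
    then show "sW c x \<in> ?R"
      using P.linear_scale[OF L] P1.linear_scale[OF L1] by (auto intro!: exI[of _ "sW1 c y"])
  qed
  moreover have "\<pi> a (T v) \<in> ?R" for a v
  proof -
    have "S (\<pi> b (\<pi> a (T v))) = S1 (\<pi>1 b (\<pi>1 a (T1 v)))" for b
      using hom_dilation_compression_generator[OF D] hom_dilation_compression_generator[OF D1]
      by simp
    then show ?thesis
      by blast
  qed
  then have "{\<pi> a (T v) | a v. True} \<subseteq> ?R"
    by blast
  ultimately have "W.span {\<pi> a (T v) | a v. True} \<subseteq> ?R"
    by (rule W.span_minimal[rotated])
  then show ?thesis
    using lm by (auto simp: linearly_minimal_def)
qed

lemma irreducible_compression_determines:
  assumes D: "hom_dilation sA mult one sV \<phi> sW \<pi> S T"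
    and irr: "irreducible_dil sW \<pi> S"
    and eq: "\<And>b. S (\<pi> b x) = S (\<pi> b x')"
  shows "x = x'"
proof -
  interpret W: vector_space sW using D by (simp add: hom_dilation_def)
  interpret P: vector_space_pair sW sV using hom_dilation_vector_space_pair[OF D] .
  note L = hom_dilation_compression_linear[OF D]
  let ?K = "{z. \<forall>b. S (\<pi> b z) = 0}"
  have "W.subspace ?K"
    unfolding W.subspace_def
    using P.linear_0[OF L] P.linear_add[OF L] P.linear_scale[OF L] by auto
  moreover have "?K \<subseteq> {w. S w = 0}"
  proof
    fix z assume "z \<in> ?K"
    then have "S (\<pi> one z) = 0"
      by blast
    then show "z \<in> {w. S w = 0}"
      using D by (simp add: hom_dilation_def)
  qed
  moreover have "\<pi> a ` ?K \<subseteq> ?K" for a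
  proof -
    have "\<pi> b (\<pi> a z) = \<pi> (mult b a) z" for b z
      using D by (simp add: hom_dilation_def)
    then show ?thesis
      by auto
  qed
  ultimately have "?K = {0}"
    using irr by (auto simp: irreducible_dil_def)
  moreover have "x - x' \<in> ?K"
    using P.linear_diff[OF L] eq by simp
  ultimately show ?thesis
    by simp
qed

lemma principle_dilation_intertwiner:
  assumes D: "hom_dilation sA mult one sV \<phi> sW \<pi> S T" and pr: "principle_dil sW \<pi> S T"
    and D1: "hom_dilation sA mult one sV \<phi> sW1 \<pi>1 S1 T1" and lm1: "linearly_minimal sW1 \<pi>1 T1"
  obtains \<Phi> where "Vector_Spaces.linear sW1 sW \<Phi>" "surj \<Phi>"
    "\<And>y b. S (\<pi> b (\<Phi> y)) = S1 (\<pi>1 b y)"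
proof -
  interpret W: vector_space sW using D by (simp add: hom_dilation_def)
  interpret W1: vector_space sW1 using D1 by (simp add: hom_dilation_def)
  interpret P: vector_space_pair sW sV using hom_dilation_vector_space_pair[OF D] .
  interpret P1: vector_space_pair sW1 sV using hom_dilation_vector_space_pair[OF D1] .
  note L = hom_dilation_compression_linear[OF D]
  note L1 = hom_dilation_compression_linear[OF D1]
  have lm: "linearly_minimal sW \<pi> T" and irr: "irreducible_dil sW \<pi> S"
    using pr by (auto simp: principle_dil_def)
  define \<Phi> where "\<Phi> y = (SOME x. \<forall>b. S (\<pi> b x) = S1 (\<pi>1 b y))" for y
  have \<Phi>: "S (\<pi> b (\<Phi> y)) = S1 (\<pi>1 b y)" for y b
  proof -
    obtain x where "\<forall>b. S1 (\<pi>1 b y) = S (\<pi> b x)"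
      using linearly_minimal_compression_realized[OF D1 D lm1] by blast
    then have "\<forall>b. S (\<pi> b x) = S1 (\<pi>1 b y)"
      by simp
    then have "\<forall>b. S (\<pi> b (\<Phi> y)) = S1 (\<pi>1 b y)"
      unfolding \<Phi>_def by (rule someI)
    then show ?thesis ..
  qed
  have \<Phi>_eqI: "\<Phi> y = x" if "\<And>b. S (\<pi> b x) = S1 (\<pi>1 b y)" for x y
    by (rule irreducible_compression_determines[OF D irr]) (simp add: \<Phi> that)
  have "Vector_Spaces.linear sW1 sW \<Phi>"
    unfolding linear_iff
  proof (intro conjI allI)
    show "vector_space sW1" "vector_space sW"
      by unfold_locales
  next
    fix y y'
    show "\<Phi> (y + y') = \<Phi> y + \<Phi> y'"
      by (rule \<Phi>_eqI) (simp add: P.linear_add[OF L] P1.linear_add[OF L1] \<Phi>)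
  next
    fix c y
    show "\<Phi> (sW1 c y) = sW c (\<Phi> y)"
      by (rule \<Phi>_eqI) (simp add: P.linear_scale[OF L] P1.linear_scale[OF L1] \<Phi>)
  qed
  moreover have "x \<in> range \<Phi>" for x
  proof -
    obtain y where "\<forall>b. S (\<pi> b x) = S1 (\<pi>1 b y)"
      using linearly_minimal_compression_realized[OF D D1 lm] by blast
    then have "\<Phi> y = x"
      by (intro \<Phi>_eqI) simp
    then show ?thesis
      by blast
  qed
  then have "surj \<Phi>"
    by blast
  ultimately show thesis
    using that \<Phi> by blast
qed

lemma linearly_minimal_irreducible_if_dim_le:
  assumes D: "hom_dilation sA mult one sV \<phi> sW \<pi> S T" and pr: "principle_dil sW \<pi> S T"
    and D1: "hom_dilation sA mult one sV \<phi> sW1 \<pi>1 S1 T1" and lm1: "linearly_minimal sW1 \<pi>1 T1"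
    and fin1: "fin_dim sW1" and dim_le: "dimension sW1 \<le> dimension sW"
  shows "irreducible_dil sW1 \<pi>1 S1"
  unfolding irreducible_dil_def
proof (intro allI impI)
  fix U
  assume U: "module.subspace sW1 U \<and> U \<subseteq> {w. S1 w = 0} \<and> (\<forall>a. \<pi>1 a ` U \<subseteq> U)"
  interpret P: vector_space_pair sW sV using hom_dilation_vector_space_pair[OF D] .
  interpret P1: vector_space_pair sW1 sV using hom_dilation_vector_space_pair[OF D1] .
  obtain \<Phi> where \<Phi>: "Vector_Spaces.linear sW1 sW \<Phi>" "surj \<Phi>"
    "\<And>y b. S (\<pi> b (\<Phi> y)) = S1 (\<pi>1 b y)"
    using principle_dilation_intertwiner[OF D pr D1 lm1] by blast
  have irr: "irreducible_dil sW \<pi> S"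
    using pr by (simp add: principle_dil_def)
  have "j = 0" if "j \<in> U" for j
  proof (rule ccontr)
    assume "j \<noteq> 0"
    have "S (\<pi> b (\<Phi> j)) = S (\<pi> b 0)" for b
    proof -
      have "\<pi>1 b j \<in> U"
        using U \<open>j \<in> U\<close> by blast
      then have "S1 (\<pi>1 b j) = 0"
        using U by blast
      then show ?thesis
        using \<Phi>(3) P.linear_0[OF hom_dilation_compression_linear[OF D]] by simp
    qed
    then have "\<Phi> j = 0"
      by (rule irreducible_compression_determines[OF D irr])
    then have "dimension sW < dimension sW1"
      by (rule dim_less_if_linear_surj_kills_nonzero[OF fin1 \<Phi>(1,2) _ \<open>j \<noteq> 0\<close>])
    with dim_le show False
      by simp
  qed
  then show "U = {0}"
    using U P1.vs1.subspace_0 by blast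
qed

lemma linearly_minimal_dim_le:
  assumes vsA: "vector_space sA" and finA: "fin_dim sA" and finV: "fin_dim sV"
    and D1: "hom_dilation sA mult one sV \<phi> sW1 \<pi>1 S1 T1" and lm1: "linearly_minimal sW1 \<pi>1 T1"
  shows "fin_dim sW1 \<and> dimension sW1 \<le> dimension sA * dimension sV"
proof -
  interpret W1: vector_space sW1 using D1 by (simp add: hom_dilation_def)
  have vsV: "vector_space sV"
    using D1 by (simp add: hom_dilation_def linear_iff)
  obtain BA where BA: "finite BA" "module.span sA BA = UNIV" "card BA = dimension sA"
    using fin_dim_obtain_basis[OF vsA finA] .
  obtain BV where BV: "finite BV" "module.span sV BV = UNIV" "card BV = dimension sV"
    using fin_dim_obtain_basis[OF vsV finV] .
  define B where "B = (\<lambda>(a, v). \<pi>1 a (T1 v)) ` (BA \<times> BV)"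
  have "finite B"
    using BA BV by (simp add: B_def)
  have "card B \<le> dimension sA * dimension sV"
    unfolding B_def using card_image_le[of "BA \<times> BV"] BA BV by (simp add: card_cartesian_product)
  have "\<pi>1 a (T1 v) \<in> W1.span B" for a v
    unfolding B_def
  proof (rule bilinear_in_span_image_of_spanning_sets[OF _ _ BA(2) BV(2)])
    show "Vector_Spaces.linear sA sW1 (\<lambda>a. \<pi>1 a (T1 v))" for v
      using D1 by (simp add: hom_dilation_def linear_iff vsA W1.vector_space_axioms)
    show "Vector_Spaces.linear sV sW1 (\<lambda>v. \<pi>1 a (T1 v))" for a
      using D1 Vector_Spaces.linear_compose[of sV sW1 T1 sW1 "\<pi>1 a"]
      by (simp add: hom_dilation_def comp_def)
  qed
  then have "W1.span B = UNIV"
    using lm1 W1.span_minimal[of "{\<pi>1 a (T1 v) | a v. True}" "W1.span B"]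
    by (auto simp: linearly_minimal_def)
  then show ?thesis
    using \<open>finite B\<close> \<open>card B \<le> _\<close> W1.dim_le_card[of UNIV B] by (auto simp: fin_dim_def)
qed

theorem corollary3p4:
  fixes sA :: "'f::field \<Rightarrow> 'a::ab_group_add \<Rightarrow> 'a"
    and mult :: "'a \<Rightarrow> 'a \<Rightarrow> 'a" and one :: 'a
    and sV :: "'f \<Rightarrow> 'v::ab_group_add \<Rightarrow> 'v" and \<phi> :: "'a \<Rightarrow> 'v \<Rightarrow> 'v"
    and sW :: "'f \<Rightarrow> 'w::ab_group_add \<Rightarrow> 'w" and \<pi> :: "'a \<Rightarrow> 'w \<Rightarrow> 'w"
    and S :: "'w \<Rightarrow> 'v" and T :: "'v \<Rightarrow> 'w"
    and sW1 :: "'f \<Rightarrow> 'w1::ab_group_add \<Rightarrow> 'w1" and \<pi>1 :: "'a \<Rightarrow> 'w1 \<Rightarrow> 'w1"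
    and S1 :: "'w1 \<Rightarrow> 'v" and T1 :: "'v \<Rightarrow> 'w1"
  assumes sys: "linear_system sA mult one sV \<phi>"
    and finA: "fin_dim sA" and finV: "fin_dim sV"
  shows "(hom_dilation sA mult one sV \<phi> sW \<pi> S T \<and> principle_dil sW \<pi> S T \<and>
          dimension sW = dimension sA * dimension sV \<longrightarrow>
          (hom_dilation sA mult one sV \<phi> sW1 \<pi>1 S1 T1 \<and> linearly_minimal sW1 \<pi>1 T1 \<longrightarrow>
           irreducible_dil sW1 \<pi>1 S1 \<and> principle_dil sW1 \<pi>1 S1 T1))
       \<and> (hom_dilation sA mult one sV \<phi> sW \<pi> S T \<and> principle_dil sW \<pi> S T \<and>
          hom_dilation sA mult one sV \<phi> sW1 \<pi>1 S1 T1 \<and> linearly_minimal sW1 \<pi>1 T1 \<and>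
          dimension sW1 \<le> dimension sW \<longrightarrow>
          irreducible_dil sW1 \<pi>1 S1)"
proof -
  have vsA: "vector_space sA"
    using sys by (simp add: linear_system_def unital_algebra_def)
  note dim_le = linearly_minimal_dim_le[OF vsA finA finV]
  show ?thesis
  proof (intro conjI impI; elim conjE)
    assume D: "hom_dilation sA mult one sV \<phi> sW \<pi> S T" and pr: "principle_dil sW \<pi> S T"
      and dimW: "dimension sW = dimension sA * dimension sV"
      and D1: "hom_dilation sA mult one sV \<phi> sW1 \<pi>1 S1 T1" and lm1: "linearly_minimal sW1 \<pi>1 T1"
    have "fin_dim sW1" "dimension sW1 \<le> dimension sW"
      using dim_le[OF D1 lm1] dimW by simp_all
    then show irr: "irreducible_dil sW1 \<pi>1 S1"
      by (rule linearly_minimal_irreducible_if_dim_le[OF D pr D1 lm1])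
    then show "principle_dil sW1 \<pi>1 S1 T1"
      using lm1 by (simp add: principle_dil_def)
  next
    assume D: "hom_dilation sA mult one sV \<phi> sW \<pi> S T" and pr: "principle_dil sW \<pi> S T"
      and D1: "hom_dilation sA mult one sV \<phi> sW1 \<pi>1 S1 T1" and lm1: "linearly_minimal sW1 \<pi>1 T1"
      and "dimension sW1 \<le> dimension sW"
    with dim_le[OF D1 lm1] show "irreducible_dil sW1 \<pi>1 S1"
      using linearly_minimal_irreducible_if_dim_le[OF D pr D1 lm1] by blast
  qed
qed

end
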